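(* For every two finite simple graphs $G$ and $H$ without isolated vertices, $$\gamma_{tR}(G\times H)\le \min\{\omega(g)\omega(h)-2|A_2||B_2|\},$$ where the minimum is taken over all total Roman dominating functions $g=(A_0,A_1,A_2)$ on $G$ and $h=(B_0,B_1,B_2)$ on $H$.
   Context: For a graph $G$ without isolated vertices, a total Roman dominating function is a map $f:V(G)\to\{0,1,2\}$, written $f=(V_0,V_1,V_2)$ with $V_i=\{v:f(v)=i\}$, such that every vertex in $V_0$ has a neighbor in $V_2$ and the subgraph induced by $V_1\cup V_2$ has no isolated vertices. Its weight is $\omega(f)=\sum_v f(v)$; $\gamma_{tR}(G)$ is the minimum weight of a total Roman dominating function. The direct product $G\times H$ has vertex set $V(G)\times V(H)$, with $(g,h)(g',h')$ an edge iff $gg'\in E(G)$ and $hh'\in E(H)$. *)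

theory Defs
  imports Main
begin

definition simple_graph :: "'a set \<Rightarrow> ('a \<Rightarrow> 'a \<Rightarrow> bool) \<Rightarrow> bool" where
  "simple_graph V E \<longleftrightarrow> finite V \<and> (\<forall>u v. E u v \<longrightarrow> u \<in> V \<and> v \<in> V)
     \<and> (\<forall>u v. E u v \<longrightarrow> E v u) \<and> (\<forall>v. \<not> E v v)"

definition no_isolated :: "'a set \<Rightarrow> ('a \<Rightarrow> 'a \<Rightarrow> bool) \<Rightarrow> bool" where
  "no_isolated V E \<longleftrightarrow> (\<forall>v\<in>V. \<exists>u. E v u)"

definition dprod_edges :: "('a \<Rightarrow> 'a \<Rightarrow> bool) \<Rightarrow> ('b \<Rightarrow> 'b \<Rightarrow> bool)
    \<Rightarrow> ('a \<times> 'b) \<Rightarrow> ('a \<times> 'b) \<Rightarrow> bool" where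
  "dprod_edges E F x y \<longleftrightarrow> E (fst x) (fst y) \<and> F (snd x) (snd y)"

text \<open>Total Roman dominating function f : V \<rightarrow> {0,1,2} (represented as a function
into nat which is 0 outside V): every vertex labelled 0 has a neighbour labelled 2,
and the subgraph induced by V_1 \<union> V_2 has no isolated vertex.\<close>

definition is_trdf :: "'a set \<Rightarrow> ('a \<Rightarrow> 'a \<Rightarrow> bool) \<Rightarrow> ('a \<Rightarrow> nat) \<Rightarrow> bool" where
  "is_trdf V E f \<longleftrightarrow>
     (\<forall>v. v \<notin> V \<longrightarrow> f v = 0) \<and> (\<forall>v\<in>V. f v \<le> 2)
     \<and> (\<forall>v\<in>V. f v = 0 \<longrightarrow> (\<exists>u. E v u \<and> f u = 2))
     \<and> (\<forall>v\<in>V. f v \<noteq> 0 \<longrightarrow> (\<exists>u. E v u \<and> f u \<noteq> 0))"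

definition weight :: "'a set \<Rightarrow> ('a \<Rightarrow> nat) \<Rightarrow> nat" where
  "weight V f = (\<Sum>v\<in>V. f v)"

definition level_set :: "'a set \<Rightarrow> ('a \<Rightarrow> nat) \<Rightarrow> nat \<Rightarrow> 'a set" where
  "level_set V f i = {v\<in>V. f v = i}"

definition gamma_tR :: "'a set \<Rightarrow> ('a \<Rightarrow> 'a \<Rightarrow> bool) \<Rightarrow> nat" where
  "gamma_tR V E = Min {weight V f | f. is_trdf V E f}"

end

theory Submission
  imports Defs
begin

text \<open>Given total Roman dominating functions g on G and h on H, the function
f(x, y) = min 2 (g(x) h(y)) is one on G \<times> H: a neighbour x' of x with g(x') \<noteq> 0,
chosen with g(x') = 2 when g(x) = 0, together with such a neighbour y' of y gives a
neighbour (x', y') of (x, y) with f(x', y') \<noteq> 0, and f(x', y') = 2 when f(x, y) = 0.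
Its weight is \<Sum> g(x) h(y) = \<omega>(g) \<omega>(h), except that each of the |A_2| |B_2| pairs of
vertices labelled 2 contributes 2 instead of 4.\<close>

definition trdf_product :: "('a \<Rightarrow> nat) \<Rightarrow> ('b \<Rightarrow> nat) \<Rightarrow> 'a \<times> 'b \<Rightarrow> nat" where
  "trdf_product g h = (\<lambda>(x, y). min 2 (g x * h y))"

lemma trdf_product_Pair [simp]: "trdf_product g h (x, y) = min 2 (g x * h y)"
  by (simp add: trdf_product_def)

lemma trdf_le_2: "is_trdf V E f \<Longrightarrow> f v \<le> 2"
  unfolding is_trdf_def by (cases "v \<in> V") auto

lemma trdf_neighbour:
  assumes "is_trdf V E f" and "x \<in> V"
  obtains x' where "E x x'" and "f x' \<noteq> 0" and "f x = 0 \<Longrightarrow> f x' = 2"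
  using assms unfolding is_trdf_def by (cases "f x = 0") force+

lemma is_trdf_trdf_product:
  assumes g: "is_trdf VG EG g" and h: "is_trdf VH EH h"
  shows "is_trdf (VG \<times> VH) (dprod_edges EG EH) (trdf_product g h)"
  unfolding is_trdf_def
proof (intro conjI allI ballI impI)
  fix p assume "p \<notin> VG \<times> VH"
  then show "trdf_product g h p = 0"
    using g h unfolding is_trdf_def by (cases p) auto
next
  fix p show "trdf_product g h p \<le> 2"
    by (cases p) simp
next
  fix p assume "p \<in> VG \<times> VH"
  then obtain x y where p: "p = (x, y)" and "x \<in> VG" "y \<in> VH" by blast
  obtain x' where x': "EG x x'" "g x' \<noteq> 0" "g x = 0 \<Longrightarrow> g x' = 2"
    using trdf_neighbour[OF g \<open>x \<in> VG\<close>] by blast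
  obtain y' where y': "EH y y'" "h y' \<noteq> 0" "h y = 0 \<Longrightarrow> h y' = 2"
    using trdf_neighbour[OF h \<open>y \<in> VH\<close>] by blast
  have edge: "dprod_edges EG EH p (x', y')"
    using x'(1) y'(1) p by (simp add: dprod_edges_def)
  have nonzero: "trdf_product g h (x', y') \<noteq> 0"
    using x'(2) y'(2) by simp
  show "\<exists>u. dprod_edges EG EH p u \<and> trdf_product g h u \<noteq> 0"
    using edge nonzero by blast
  assume "trdf_product g h p = 0"
  then have "g x = 0 \<or> h y = 0"
    using p by (simp add: min_def split: if_splits)
  then have "trdf_product g h (x', y') = 2"
    using x' y' by (auto simp: min_def)
  then show "\<exists>u. dprod_edges EG EH p u \<and> trdf_product g h u = 2"
    using edge by blast
qed

lemma card_level_set_eq_sum: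
  "finite V \<Longrightarrow> card (level_set V f i) = (\<Sum>v\<in>V. of_bool (f v = i))"
  unfolding level_set_def by (simp add: sum_of_bool_eq Int_def conj_commute)

lemma int_min_2_mult:
  fixes a b :: nat
  assumes "a \<le> 2" and "b \<le> 2"
  shows "int (min 2 (a * b)) = int a * int b - 2 * of_bool (a = 2) * of_bool (b = 2)"
  using assms by (auto simp: le_Suc_eq numeral_2_eq_2)

lemma weight_trdf_product:
  assumes g: "is_trdf VG EG g" and h: "is_trdf VH EH h"
    and "finite VG" and "finite VH"
  shows "int (weight (VG \<times> VH) (trdf_product g h)) =
    int (weight VG g) * int (weight VH h)
      - 2 * int (card (level_set VG g 2)) * int (card (level_set VH h 2))"
proof -
  have "int (weight (VG \<times> VH) (trdf_product g h))
      = (\<Sum>(x, y)\<in>VG \<times> VH. int (g x) * int (h y)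
          - 2 * of_bool (g x = 2) * of_bool (h y = 2))"
    unfolding weight_def of_nat_sum
    by (intro sum.cong refl) (auto simp: int_min_2_mult trdf_le_2[OF g] trdf_le_2[OF h])
  also have "\<dots> = (\<Sum>(x, y)\<in>VG \<times> VH. int (g x) * int (h y))
      - 2 * (\<Sum>(x, y)\<in>VG \<times> VH. of_bool (g x = 2) * of_bool (h y = 2))"
    by (simp add: sum_subtractf sum_distrib_left case_prod_beta mult.assoc)
  also have "\<dots> = (\<Sum>x\<in>VG. int (g x)) * (\<Sum>y\<in>VH. int (h y))
      - 2 * ((\<Sum>x\<in>VG. of_bool (g x = 2)) * (\<Sum>y\<in>VH. of_bool (h y = 2)))"
    by (simp only: sum_product sum.cartesian_product)
  finally show ?thesis
    using assms by (simp add: weight_def card_level_set_eq_sum)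
qed

lemma weight_trdf_le: "is_trdf V E f \<Longrightarrow> weight V f \<le> 2 * card V"
  using sum_mono[of V f "\<lambda>_. 2"] trdf_le_2 unfolding weight_def by fastforce

lemma card_level_set_le: "finite V \<Longrightarrow> card (level_set V f i) \<le> card V"
  unfolding level_set_def by (intro card_mono) auto

lemma gamma_tR_le_weight:
  assumes "finite V" and "is_trdf V E f"
  shows "gamma_tR V E \<le> weight V f"
proof -
  have "{weight V f | f. is_trdf V E f} \<subseteq> {..2 * card V}"
    using weight_trdf_le by blast
  then have "finite {weight V f | f. is_trdf V E f}"
    by (rule finite_subset) simp
  then show ?thesis
    unfolding gamma_tR_def using assms(2) by (intro Min_le) blast+
qed

lemma finite_trdf_pair_statistics:
  fixes F :: "nat \<Rightarrow> nat \<Rightarrow> nat \<Rightarrow> nat \<Rightarrow> 'c"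
  assumes "finite VG" and "finite VH"
  shows "finite {F (weight VG g) (weight VH h) (card (level_set VG g i)) (card (level_set VH h j))
    | g h. is_trdf VG EG g \<and> is_trdf VH EH h}" (is "finite ?S")
proof -
  let ?box = "{..2 * card VG} \<times> {..2 * card VH} \<times> {..card VG} \<times> {..card VH}"
  have "?S \<subseteq> (\<lambda>(a, b, c, d). F a b c d) ` ?box"
  proof
    fix s assume "s \<in> ?S"
    then obtain g h where g: "is_trdf VG EG g" and h: "is_trdf VH EH h" and s: "s =
        F (weight VG g) (weight VH h) (card (level_set VG g i)) (card (level_set VH h j))"
      by blast
    have "(weight VG g, weight VH h, card (level_set VG g i), card (level_set VH h j)) \<in> ?box"
      unfolding mem_Sigma_iff atMost_iff
      using weight_trdf_le[OF g] weight_trdf_le[OF h] card_level_set_le[OF assms(1)]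
        card_level_set_le[OF assms(2)] by blast
    then show "s \<in> (\<lambda>(a, b, c, d). F a b c d) ` ?box"
      by (rule rev_image_eqI) (simp add: s)
  qed
  then show ?thesis
    by (rule finite_subset) simp
qed

lemma is_trdf_const_2:
  assumes "simple_graph V E" and "no_isolated V E"
  shows "is_trdf V E (\<lambda>v. if v \<in> V then 2 else 0)"
  using assms unfolding is_trdf_def simple_graph_def no_isolated_def by fastforce

theorem mainTheorem3:
  fixes VG :: "'a set" and EG :: "'a \<Rightarrow> 'a \<Rightarrow> bool"
    and VH :: "'b set" and EH :: "'b \<Rightarrow> 'b \<Rightarrow> bool"
  assumes "simple_graph VG EG" and "no_isolated VG EG"
    and "simple_graph VH EH" and "no_isolated VH EH"
  shows "int (gamma_tR (VG \<times> VH) (dprod_edges EG EH)) \<le>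
         Min {int (weight VG g) * int (weight VH h)
                - 2 * int (card (level_set VG g 2)) * int (card (level_set VH h 2))
              | g h. is_trdf VG EG g \<and> is_trdf VH EH h}"
    (is "_ \<le> Min ?S")
proof -
  have fin: "finite VG" "finite VH"
    using assms(1,3) by (auto simp: simple_graph_def)
  have "finite ?S"
    using finite_trdf_pair_statistics[OF fin, of "\<lambda>a b c d. int a * int b - 2 * int c * int d"]
    by simp
  moreover have "?S \<noteq> {}"
    using is_trdf_const_2[OF assms(1,2)] is_trdf_const_2[OF assms(3,4)] by blast
  ultimately have "Min ?S \<in> ?S"
    by (rule Min_in)
  then obtain g h where g: "is_trdf VG EG g" and h: "is_trdf VH EH h" and min: "Min ?S =
      int (weight VG g) * int (weight VH h)
        - 2 * int (card (level_set VG g 2)) * int (card (level_set VH h 2))"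
    by blast
  have "int (gamma_tR (VG \<times> VH) (dprod_edges EG EH))
      \<le> int (weight (VG \<times> VH) (trdf_product g h))"
    using gamma_tR_le_weight[OF _ is_trdf_trdf_product[OF g h]] fin by simp
  also have "\<dots> = Min ?S"
    using weight_trdf_product[OF g h fin] min by simp
  finally show ?thesis .
qed

end
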